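(* Let $G=(U\sqcup V,E)$ be a bipartite graph with $U=\{u_1,\ldots,u_n\}$, $V=\{v_1,\ldots,v_s\}$, $n\ge s$, and integer weights $w:E\to\mathbb{Z}$, and let $k\in\mathbb{Z}$. Let $U'=\{u'_1,\ldots,u'_n\}$ and $V'=\{v'_1,\ldots,v'_s\}$ be new vertices, and let $G_s$ be the bipartite graph with bipartition classes $U\sqcup V'$ and $V\sqcup U'$ and edge set $E\cup E_f\cup E_U$, where $E_f=\{v'_ju'_i:\ u_iv_j\in E\}$ and $E_U=\{u_iu'_i:\ 1\le i\le n\}$. Define $w_s$ by $w_s(e)=w(e)$ for $e\in E$, $w_s(v'_ju'_i)=w(u_iv_j)$ for $v'_ju'_i\in E_f$, and $w_s(e)=k$ for $e\in E_U$. If $N$ is a minimum weight perfect matching of $\{G_s,w_s\}$, then $M=N\cap E$ is an optimum matching of $\{G,w\}$ which covers $V$.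
   Context: A matching is a set of pairwise vertex-disjoint edges; it is perfect if it covers all vertices. For a weight function $c$, the weight of a matching $M$ is $\sum_{e\in M}c(e)$; a minimum weight perfect matching is a perfect matching of minimum weight among all perfect matchings. An optimum matching of $\{G,w\}$ is a matching of maximum cardinality in $G$ whose weight is minimum among all maximum cardinality matchings of $G$. *)

theory Defs
  imports Main
begin

(* Generic matching notions; a graph is given by its edge set, each edge a 2-element vertex set. *)
definition is_matching :: "'a set set \<Rightarrow> 'a set set \<Rightarrow> bool" where
  "is_matching E M \<longleftrightarrow> M \<subseteq> E \<and> (\<forall>e\<in>M. \<forall>f\<in>M. e \<noteq> f \<longrightarrow> e \<inter> f = {})"

definition perfect_matching :: "'a set \<Rightarrow> 'a set set \<Rightarrow> 'a set set \<Rightarrow> bool" where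
  "perfect_matching Vs E M \<longleftrightarrow> is_matching E M \<and> \<Union>M = Vs"

definition mweight :: "('a set \<Rightarrow> int) \<Rightarrow> 'a set set \<Rightarrow> int" where
  "mweight c M = (\<Sum>e\<in>M. c e)"

definition min_weight_perfect_matching ::
  "'a set \<Rightarrow> 'a set set \<Rightarrow> ('a set \<Rightarrow> int) \<Rightarrow> 'a set set \<Rightarrow> bool" where
  "min_weight_perfect_matching Vs E c M \<longleftrightarrow> perfect_matching Vs E M \<and>
     (\<forall>M'. perfect_matching Vs E M' \<longrightarrow> mweight c M \<le> mweight c M')"

definition max_card_matching :: "'a set set \<Rightarrow> 'a set set \<Rightarrow> bool" where
  "max_card_matching E M \<longleftrightarrow> is_matching E M \<and>
     (\<forall>M'. is_matching E M' \<longrightarrow> card M' \<le> card M)"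

definition optimum_matching :: "'a set set \<Rightarrow> ('a set \<Rightarrow> int) \<Rightarrow> 'a set set \<Rightarrow> bool" where
  "optimum_matching E c M \<longleftrightarrow> max_card_matching E M \<and>
     (\<forall>M'. max_card_matching E M' \<longrightarrow> mweight c M \<le> mweight c M')"

(* Vertices: Uv i = u_i, Vv j = v_j, Up i = u'_i, Vp j = v'_j (0-based indices). *)
datatype vtx = Uv nat | Vv nat | Up nat | Vp nat

definition bip_edges :: "nat \<Rightarrow> nat \<Rightarrow> vtx set set" where
  "bip_edges n s = {{Uv i, Vv j} | i j. i < n \<and> j < s}"

fun unprime :: "vtx \<Rightarrow> vtx" where
  "unprime (Up i) = Uv i" | "unprime (Vp j) = Vv j" | "unprime (Uv i) = Uv i" | "unprime (Vv j) = Vv j"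

definition Ef :: "vtx set set \<Rightarrow> vtx set set" where
  "Ef E = {{Vp j, Up i} | i j. {Uv i, Vv j} \<in> E}"

definition EU :: "nat \<Rightarrow> vtx set set" where
  "EU n = {{Uv i, Up i} | i. i < n}"

definition Gs_vertices :: "nat \<Rightarrow> nat \<Rightarrow> vtx set" where
  "Gs_vertices n s = Uv ` {..<n} \<union> Vp ` {..<s} \<union> Vv ` {..<s} \<union> Up ` {..<n}"

definition Gs_edges :: "nat \<Rightarrow> vtx set set \<Rightarrow> vtx set set" where
  "Gs_edges n E = E \<union> Ef E \<union> EU n"

definition ws :: "vtx set set \<Rightarrow> (vtx set \<Rightarrow> int) \<Rightarrow> int \<Rightarrow> vtx set \<Rightarrow> int" where
  "ws E w k e = (if e \<in> E then w e else if e \<in> Ef E then w (unprime ` e) else k)"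

end

theory Submission
  imports Defs
begin

text \<open>
  Swapping every vertex with its primed copy is an automorphism \<open>\<sigma>\<close> of \<open>{G\<^sub>s, w\<^sub>s}\<close> which
  exchanges \<open>E\<close> and \<open>E\<^sub>f\<close> and fixes \<open>E\<^sub>U\<close>. A perfect matching \<open>N\<close> of \<open>G\<^sub>s\<close> therefore consists
  of \<open>M\<^sub>1 = N \<inter> E\<close>, the \<open>\<sigma>\<close>-image of \<open>M\<^sub>2 = \<sigma>N \<inter> E\<close> and \<open>n - s\<close> edges of \<open>E\<^sub>U\<close>, where
  \<open>M\<^sub>1, M\<^sub>2\<close> are matchings of \<open>G\<close> covering \<open>V\<close>; so \<open>w\<^sub>s(N) = w(M\<^sub>1) + w(M\<^sub>2) + k(n - s)\<close>.
  Conversely a matching \<open>M\<close> covering \<open>V\<close> extends to the perfect matching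
  \<open>M \<union> \<sigma>M \<union> {u\<^sub>iu'\<^sub>i : u\<^sub>i unmatched}\<close> of weight \<open>2w(M) + k(n - s)\<close>. Minimality of \<open>N\<close> gives
  \<open>w(M\<^sub>1) + w(M\<^sub>2) \<le> 2w(M)\<close> for all such \<open>M\<close>; taking \<open>M = M\<^sub>1, M\<^sub>2\<close> forces \<open>w(M\<^sub>1) = w(M\<^sub>2)\<close>.
  Since \<open>|V| = s\<close>, the matchings covering \<open>V\<close> are exactly the maximum ones.
\<close>

lemma is_matching_subset: "is_matching E M \<Longrightarrow> M' \<subseteq> M \<Longrightarrow> is_matching E M'"
  unfolding is_matching_def by blast

lemma is_matching_Un:
  assumes "is_matching E M" "is_matching E' M'" "\<Union>M \<inter> \<Union>M' = {}"
  shows "is_matching (E \<union> E') (M \<union> M')"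
  unfolding is_matching_def
proof (intro conjI ballI impI)
  show "M \<union> M' \<subseteq> E \<union> E'" using assms(1,2) unfolding is_matching_def by blast
  have cross: "e \<inter> g = {}" if "e \<in> M" "g \<in> M'" for e g
    using assms(3) that by blast
  fix e g assume "e \<in> M \<union> M'" "g \<in> M \<union> M'" "e \<noteq> g"
  then show "e \<inter> g = {}"
    using assms(1,2) cross unfolding is_matching_def by (metis Int_commute UnE)
qed

lemma is_matching_image:
  assumes "inj f" "is_matching E M"
  shows "is_matching ((`) f ` E) ((`) f ` M)"
  unfolding is_matching_def
proof (intro conjI ballI impI)
  show "(`) f ` M \<subseteq> (`) f ` E" using assms(2) unfolding is_matching_def by blast
  fix e' g' assume "e' \<in> (`) f ` M" "g' \<in> (`) f ` M" "e' \<noteq> g'"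
  then obtain e g where "e \<in> M" "g \<in> M" "e \<noteq> g" "e' = f ` e" "g' = f ` g" by blast
  then show "e' \<inter> g' = {}"
    using assms unfolding is_matching_def by (simp flip: image_Int)
qed

lemma perfect_matching_image:
  assumes "inj f" "perfect_matching Vs E M"
  shows "perfect_matching (f ` Vs) ((`) f ` E) ((`) f ` M)"
  using assms is_matching_image unfolding perfect_matching_def by (metis image_Union)

lemma mweight_image:
  assumes "inj f"
  shows "mweight c ((`) f ` M) = mweight (\<lambda>e. c (f ` e)) M"
  unfolding mweight_def using assms
  by (simp add: sum.reindex inj_on_image inj_on_subset[of f UNIV])

lemma card_Union_matching_Int:
  assumes "is_matching E M" "finite M" "\<And>e. e \<in> M \<Longrightarrow> card (e \<inter> A) = 1"
  shows "card (\<Union>M \<inter> A) = card M"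
proof -
  have "\<Union>M \<inter> A = \<Union>((\<lambda>e. e \<inter> A) ` M)" by blast
  moreover have "card (\<Union>((\<lambda>e. e \<inter> A) ` M)) = (\<Sum>e\<in>M. card (e \<inter> A))"
  proof (rule card_UN_disjoint)
    show "\<forall>e\<in>M. finite (e \<inter> A)" using assms(3) by (metis card_ge_0_finite zero_less_one)
    show "\<forall>e\<in>M. \<forall>g\<in>M. e \<noteq> g \<longrightarrow> e \<inter> A \<inter> (g \<inter> A) = {}"
      using assms(1) unfolding is_matching_def by blast
  qed (fact assms(2))
  ultimately show ?thesis using assms(3) by simp
qed

lemma bip_edgesE:
  assumes "e \<in> bip_edges n s"
  obtains i j where "i < n" "j < s" "e = {Uv i, Vv j}"
  using assms unfolding bip_edges_def by blast

lemma finite_bip_edges: "finite (bip_edges n s)"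
proof -
  have "bip_edges n s = (\<lambda>(i, j). {Uv i, Vv j}) ` ({..<n} \<times> {..<s})"
    unfolding bip_edges_def by auto
  then show ?thesis by simp
qed

lemma Union_bip_edges_subset:
  assumes "M \<subseteq> bip_edges n s"
  shows "\<Union>M \<subseteq> Uv ` {..<n} \<union> Vv ` {..<s}"
proof
  fix x assume "x \<in> \<Union>M"
  then obtain e where "e \<in> M" "x \<in> e" by blast
  with assms obtain i j where "i < n" "j < s" "e = {Uv i, Vv j}" by (meson bip_edgesE subsetD)
  with \<open>x \<in> e\<close> show "x \<in> Uv ` {..<n} \<union> Vv ` {..<s}" by auto
qed

lemma card_bip_matching:
  assumes "M \<subseteq> bip_edges n s" "is_matching E M"
  shows "card (\<Union>M \<inter> Vv ` {..<s}) = card M"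
proof (rule card_Union_matching_Int[OF assms(2)])
  show "finite M" using assms(1) finite_bip_edges by (rule finite_subset)
  fix e assume "e \<in> M"
  with assms(1) obtain i j where "j < s" "e = {Uv i, Vv j}" by (meson bip_edgesE subsetD)
  then have "e \<inter> Vv ` {..<s} = {Vv j}" by auto
  then show "card (e \<inter> Vv ` {..<s}) = 1" by simp
qed

lemma card_Vv_lessThan: "card (Vv ` {..<s}) = s"
  by (simp add: card_image inj_on_def)

lemma card_bip_matching_le:
  assumes "M \<subseteq> bip_edges n s" "is_matching E M"
  shows "card M \<le> s"
proof -
  have "card (\<Union>M \<inter> Vv ` {..<s}) \<le> card (Vv ` {..<s})" by (intro card_mono) auto
  then show ?thesis using card_bip_matching[OF assms] card_Vv_lessThan by simp
qed

lemma card_bip_matching_eq_iff: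
  assumes "M \<subseteq> bip_edges n s" "is_matching E M"
  shows "card M = s \<longleftrightarrow> Vv ` {..<s} \<subseteq> \<Union>M"
proof -
  have "card (\<Union>M \<inter> Vv ` {..<s}) = card (Vv ` {..<s}) \<longleftrightarrow> \<Union>M \<inter> Vv ` {..<s} = Vv ` {..<s}"
    by (intro iffI card_subset_eq) auto
  then show ?thesis using card_bip_matching[OF assms] card_Vv_lessThan by auto
qed

lemma max_card_matching_bip_iff:
  assumes "E \<subseteq> bip_edges n s" "is_matching E M\<^sub>0" "Vv ` {..<s} \<subseteq> \<Union>M\<^sub>0"
  shows "max_card_matching E M \<longleftrightarrow> is_matching E M \<and> Vv ` {..<s} \<subseteq> \<Union>M"
proof -
  have bip: "M \<subseteq> bip_edges n s" if "is_matching E M" for M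
    using that assms(1) unfolding is_matching_def by blast
  have "card M\<^sub>0 = s" using card_bip_matching_eq_iff[OF bip] assms(2,3) by blast
  show ?thesis
  proof
    assume max: "max_card_matching E M"
    then have M: "is_matching E M" unfolding max_card_matching_def by blast
    have "s \<le> card M" using max assms(2) \<open>card M\<^sub>0 = s\<close> unfolding max_card_matching_def by blast
    then have "card M = s" using card_bip_matching_le[OF bip M] M by simp
    then show "is_matching E M \<and> Vv ` {..<s} \<subseteq> \<Union>M"
      using card_bip_matching_eq_iff[OF bip M] M by blast
  next
    assume M: "is_matching E M \<and> Vv ` {..<s} \<subseteq> \<Union>M"
    then have "card M = s" using card_bip_matching_eq_iff[OF bip] by blast
    then show "max_card_matching E M"
      unfolding max_card_matching_def using M card_bip_matching_le[OF bip] by blast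
  qed
qed

fun swap_prime :: "vtx \<Rightarrow> vtx" where
  "swap_prime (Uv i) = Up i" | "swap_prime (Up i) = Uv i"
| "swap_prime (Vv j) = Vp j" | "swap_prime (Vp j) = Vv j"

lemma swap_prime_swap_prime [simp]: "swap_prime (swap_prime x) = x"
  by (cases x) auto

lemma inj_swap_prime: "inj swap_prime"
  by (metis injI swap_prime_swap_prime)

definition mirror :: "vtx set set \<Rightarrow> vtx set set" where
  "mirror N = (`) swap_prime ` N"

lemma mirror_mirror [simp]: "mirror (mirror N) = N"
  unfolding mirror_def by (simp add: image_image)

lemma mirror_Int: "mirror (N \<inter> N') = mirror N \<inter> mirror N'"
  unfolding mirror_def by (intro image_Int inj_on_image) (simp add: inj_swap_prime inj_on_subset)

lemma mirror_bip:
  assumes "E \<subseteq> bip_edges n s"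
  shows "mirror E = Ef E"
proof
  show "mirror E \<subseteq> Ef E"
  proof
    fix x assume "x \<in> mirror E"
    then obtain e where "e \<in> E" "x = swap_prime ` e" unfolding mirror_def by blast
    moreover from this obtain i j where "e = {Uv i, Vv j}" using assms by (meson bip_edgesE subsetD)
    ultimately show "x \<in> Ef E" unfolding Ef_def by (auto simp: insert_commute)
  qed
  show "Ef E \<subseteq> mirror E"
  proof
    fix x assume "x \<in> Ef E"
    then obtain i j where "{Uv i, Vv j} \<in> E" "x = swap_prime ` {Uv i, Vv j}"
      unfolding Ef_def by (auto simp: insert_commute)
    then show "x \<in> mirror E" unfolding mirror_def by blast
  qed
qed

lemma mirror_Ef: "E \<subseteq> bip_edges n s \<Longrightarrow> mirror (Ef E) = E"
  using mirror_bip mirror_mirror by metis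

lemma mirror_Un: "mirror (N \<union> N') = mirror N \<union> mirror N'"
  unfolding mirror_def by (rule image_Un)

lemma mirror_subset_EU:
  assumes "X \<subseteq> EU n"
  shows "mirror X = X"
proof -
  have "swap_prime ` e = e" if "e \<in> X" for e using that assms unfolding EU_def by auto
  then have "mirror X = (\<lambda>e. e) ` X" unfolding mirror_def by (rule image_cong[OF refl])
  then show ?thesis by simp
qed

lemma mirror_Gs_edges:
  assumes "E \<subseteq> bip_edges n s"
  shows "mirror (Gs_edges n E) = Gs_edges n E"
  unfolding Gs_edges_def mirror_Un mirror_bip[OF assms] mirror_Ef[OF assms]
    mirror_subset_EU[OF order_refl] by blast

lemma swap_prime_Gs_vertices: "swap_prime ` Gs_vertices n s = Gs_vertices n s"
  unfolding Gs_vertices_def by (auto simp: image_Un image_image)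

lemma perfect_matching_mirror:
  assumes "E \<subseteq> bip_edges n s" "perfect_matching (Gs_vertices n s) (Gs_edges n E) N"
  shows "perfect_matching (Gs_vertices n s) (Gs_edges n E) (mirror N)"
  using perfect_matching_image[OF inj_swap_prime assms(2)]
  unfolding swap_prime_Gs_vertices mirror_Gs_edges[OF assms(1), unfolded mirror_def]
  by (simp add: mirror_def)

lemma bip_edges_notin_Ef_EU:
  assumes "e \<in> bip_edges n s"
  shows "e \<notin> Ef E" "e \<notin> EU n'"
  using assms unfolding bip_edges_def Ef_def EU_def by (auto simp: doubleton_eq_iff)

lemma Ef_EU_disjoint: "Ef E \<inter> EU n = {}"
  unfolding Ef_def EU_def by (auto simp: doubleton_eq_iff)

lemma ws_swap_prime:
  assumes "E \<subseteq> bip_edges n s" "e \<in> Gs_edges n E"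
  shows "ws E w k (swap_prime ` e) = ws E w k e"
proof -
  consider (E) i j where "{Uv i, Vv j} \<in> E" "e = {Uv i, Vv j}"
    | (Ef) i j where "{Uv i, Vv j} \<in> E" "e = {Vp j, Up i}"
    | (EU) i where "e = {Uv i, Up i}"
    using assms unfolding Gs_edges_def Ef_def EU_def by (blast elim: bip_edgesE)
  then show ?thesis
  proof cases
    case E
    then have "swap_prime ` e \<in> Ef E" "swap_prime ` e \<notin> E"
      using assms(1) unfolding Ef_def bip_edges_def by (auto simp: insert_commute doubleton_eq_iff)
    then show ?thesis using E unfolding ws_def by (simp add: insert_commute)
  next
    case Ef
    then have "e \<in> Ef E" "e \<notin> E"
      using assms(1) unfolding Ef_def bip_edges_def by (auto simp: doubleton_eq_iff)
    then show ?thesis using Ef unfolding ws_def by (simp add: insert_commute)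
  next
    case EU
    then show ?thesis by (simp add: insert_commute)
  qed
qed

lemma mweight_ws_subset: "X \<subseteq> E \<Longrightarrow> mweight (ws E w k) X = mweight w X"
  unfolding mweight_def ws_def by (intro sum.cong) auto

lemma mweight_ws_EU:
  assumes "E \<subseteq> bip_edges n s" "X \<subseteq> EU n"
  shows "mweight (ws E w k) X = k * int (card X)"
proof -
  have "ws E w k e = k" if "e \<in> X" for e
  proof -
    have "e \<in> EU n" using that assms(2) by blast
    then have "e \<notin> E" "e \<notin> Ef E"
      using assms(1) bip_edges_notin_Ef_EU(2) Ef_EU_disjoint by blast+
    then show ?thesis unfolding ws_def by simp
  qed
  then show ?thesis unfolding mweight_def by simp
qed

lemma mweight_mirror:
  assumes "E \<subseteq> bip_edges n s" "X \<subseteq> Gs_edges n E"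
  shows "mweight (ws E w k) (mirror X) = mweight (ws E w k) X"
  unfolding mirror_def mweight_image[OF inj_swap_prime]
  using ws_swap_prime[OF assms(1)] assms(2) unfolding mweight_def by (intro sum.cong) auto

lemma Gs_perfect_matching_finite:
  "perfect_matching (Gs_vertices n s) (Gs_edges n E) N \<Longrightarrow> finite N"
  unfolding perfect_matching_def Gs_vertices_def by (metis finite_UnionD finite_Un finite_imageI finite_lessThan)

lemma Gs_perfect_matching_Int_E:
  assumes "perfect_matching (Gs_vertices n s) (Gs_edges n E) N"
  shows "is_matching E (N \<inter> E)" "Vv ` {..<s} \<subseteq> \<Union>(N \<inter> E)"
proof -
  show "is_matching E (N \<inter> E)" using assms unfolding perfect_matching_def is_matching_def by blast
  show "Vv ` {..<s} \<subseteq> \<Union>(N \<inter> E)"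
  proof
    fix x assume "x \<in> Vv ` {..<s}"
    then obtain j where "x = Vv j" by blast
    moreover have "x \<in> \<Union>N" using assms \<open>x \<in> Vv ` {..<s}\<close>
      unfolding perfect_matching_def Gs_vertices_def by blast
    then obtain g where "g \<in> N" "x \<in> g" by blast
    moreover have "g \<in> Gs_edges n E" using assms \<open>g \<in> N\<close>
      unfolding perfect_matching_def is_matching_def by blast
    ultimately show "x \<in> \<Union>(N \<inter> E)" unfolding Gs_edges_def Ef_def EU_def by auto
  qed
qed

lemma Gs_perfect_card_EU:
  assumes E: "E \<subseteq> bip_edges n s" and N: "perfect_matching (Gs_vertices n s) (Gs_edges n E) N"
  shows "card (N \<inter> E) + card (N \<inter> EU n) = n"
proof -
  let ?P = "N \<inter> E \<union> N \<inter> EU n"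
  have fin: "finite N" using Gs_perfect_matching_finite[OF N] .
  have NG: "N \<subseteq> Gs_edges n E" using N unfolding perfect_matching_def is_matching_def by blast
  have "N \<inter> E \<inter> (N \<inter> EU n) = {}" using E bip_edges_notin_Ef_EU(2) by blast
  then have "card ?P = card (N \<inter> E) + card (N \<inter> EU n)"
    using fin by (simp add: card_Un_disjoint)
  moreover have "card (\<Union>?P \<inter> Uv ` {..<n}) = card ?P"
  proof (rule card_Union_matching_Int)
    show "is_matching (Gs_edges n E) ?P"
      using N unfolding perfect_matching_def by (rule is_matching_subset[OF conjunct1]) blast
    show "finite ?P" using fin by simp
    fix e assume "e \<in> ?P"
    have "\<exists>i<n. e \<inter> Uv ` {..<n} = {Uv i}"
    proof (cases "e \<in> E")
      case True
      then obtain i j where "i < n" "e = {Uv i, Vv j}" using E by (meson bip_edgesE subsetD)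
      then show ?thesis by auto
    next
      case False
      then obtain i where "i < n" "e = {Uv i, Up i}" using \<open>e \<in> ?P\<close> unfolding EU_def by blast
      then show ?thesis by auto
    qed
    then obtain i where "e \<inter> Uv ` {..<n} = {Uv i}" by blast
    then show "card (e \<inter> Uv ` {..<n}) = 1" by simp
  qed
  moreover have "\<Union>?P \<inter> Uv ` {..<n} = Uv ` {..<n}"
  proof (intro equalityI subsetI)
    fix x assume "x \<in> Uv ` {..<n}"
    then have "x \<in> \<Union>N" using N unfolding perfect_matching_def Gs_vertices_def by blast
    then obtain g where "g \<in> N" "x \<in> g" by blast
    moreover have "g \<notin> Ef E" using \<open>x \<in> Uv ` {..<n}\<close> \<open>x \<in> g\<close> unfolding Ef_def by auto
    ultimately show "x \<in> \<Union>?P \<inter> Uv ` {..<n}"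
      using NG \<open>x \<in> Uv ` {..<n}\<close> unfolding Gs_edges_def by blast
  qed blast
  moreover have "card (Uv ` {..<n}) = n" by (simp add: card_image inj_on_def)
  ultimately show ?thesis by simp
qed

lemma mweight_Gs_perfect:
  assumes E: "E \<subseteq> bip_edges n s" and N: "perfect_matching (Gs_vertices n s) (Gs_edges n E) N"
  shows "mweight (ws E w k) N
    = mweight w (N \<inter> E) + mweight w (mirror N \<inter> E) + k * int (n - s)"
proof -
  have "N \<inter> E \<subseteq> bip_edges n s" using E by blast
  then have "card (N \<inter> E) = s"
    using card_bip_matching_eq_iff Gs_perfect_matching_Int_E[OF N] by blast
  have fin: "finite N" using Gs_perfect_matching_finite[OF N] .
  have NG: "N \<subseteq> Gs_edges n E" using N unfolding perfect_matching_def is_matching_def by blast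
  have split: "N = N \<inter> E \<union> N \<inter> Ef E \<union> N \<inter> EU n" using NG unfolding Gs_edges_def by blast
  have disj: "N \<inter> E \<inter> (N \<inter> Ef E) = {}" "(N \<inter> E \<union> N \<inter> Ef E) \<inter> (N \<inter> EU n) = {}"
    using E bip_edges_notin_Ef_EU Ef_EU_disjoint by blast+
  have "mweight (ws E w k) N = mweight (ws E w k) (N \<inter> E \<union> N \<inter> Ef E \<union> N \<inter> EU n)"
    by (rule arg_cong[OF split])
  also have "\<dots> = mweight (ws E w k) (N \<inter> E) + mweight (ws E w k) (N \<inter> Ef E)
      + mweight (ws E w k) (N \<inter> EU n)"
    unfolding mweight_def using fin disj by (simp add: sum.union_disjoint)
  also have "mweight (ws E w k) (N \<inter> Ef E) = mweight (ws E w k) (mirror N \<inter> E)"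
  proof -
    have "N \<inter> Ef E \<subseteq> Gs_edges n E" using NG by blast
    then show ?thesis using mweight_mirror[OF E] by (metis mirror_Int mirror_Ef[OF E])
  qed
  finally show ?thesis
    using mweight_ws_subset mweight_ws_EU[OF E] Gs_perfect_card_EU[OF E N] \<open>card (N \<inter> E) = s\<close>
    by (metis Int_lower2 add_diff_cancel_left')
qed

definition unmatched_EU :: "nat \<Rightarrow> vtx set set \<Rightarrow> vtx set set" where
  "unmatched_EU n M = {{Uv i, Up i} | i. i < n \<and> Uv i \<notin> \<Union>M}"

definition doubled_matching :: "nat \<Rightarrow> vtx set set \<Rightarrow> vtx set set" where
  "doubled_matching n M = M \<union> mirror M \<union> unmatched_EU n M"

lemma unmatched_EU_subset: "unmatched_EU n M \<subseteq> EU n"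
  unfolding unmatched_EU_def EU_def by blast

lemma Union_unmatched_EU:
  "\<Union>(unmatched_EU n M) = Uv ` {i. i < n \<and> Uv i \<notin> \<Union>M} \<union> swap_prime ` Uv ` {i. i < n \<and> Uv i \<notin> \<Union>M}"
  unfolding unmatched_EU_def by (auto simp: image_image)

lemma is_matching_unmatched_EU: "is_matching (EU n) (unmatched_EU n M)"
  unfolding is_matching_def
proof (intro conjI ballI impI)
  show "unmatched_EU n M \<subseteq> EU n" by (rule unmatched_EU_subset)
  fix e f assume "e \<in> unmatched_EU n M" "f \<in> unmatched_EU n M" "e \<noteq> f"
  then obtain i i' where "e = {Uv i, Up i}" "f = {Uv i', Up i'}" "i \<noteq> i'"
    unfolding unmatched_EU_def by blast
  then show "e \<inter> f = {}" by auto
qed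

lemma mirror_doubled_matching: "mirror (doubled_matching n M) = doubled_matching n M"
  unfolding doubled_matching_def mirror_Un
  by (simp add: mirror_subset_EU[OF unmatched_EU_subset] Un_commute)

lemma doubled_matching_Int_bip:
  assumes "E \<subseteq> bip_edges n s" "M \<subseteq> E"
  shows "doubled_matching n M \<inter> E = M"
proof -
  have "mirror M \<subseteq> Ef E" using assms mirror_bip[OF assms(1)] unfolding mirror_def by blast
  moreover have "Ef E \<inter> E = {}" "EU n \<inter> E = {}"
    using assms(1) bip_edges_notin_Ef_EU by blast+
  ultimately show ?thesis
    unfolding doubled_matching_def using assms(2) unmatched_EU_subset by blast
qed

lemma unprimed_Int_swap_prime:
  assumes "X \<subseteq> range Uv \<union> range Vv" "Y \<subseteq> range Uv \<union> range Vv"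
  shows "X \<inter> swap_prime ` Y = {}"
proof -
  have False if "y \<in> Y" "swap_prime y \<in> X" for y
    using that assms by (cases y) force+
  then show ?thesis by blast
qed

lemma is_matching_doubled_matching:
  assumes E: "E \<subseteq> bip_edges n s" and M: "is_matching E M"
  shows "is_matching (Gs_edges n E) (doubled_matching n M)"
proof -
  let ?U = "Uv ` {i. i < n \<and> Uv i \<notin> \<Union>M}"
  have "M \<subseteq> bip_edges n s" using M E unfolding is_matching_def by blast
  then have "\<Union>M \<subseteq> Uv ` {..<n} \<union> Vv ` {..<s}" by (rule Union_bip_edges_subset)
  then have unprimed: "\<Union>M \<subseteq> range Uv \<union> range Vv" "?U \<subseteq> range Uv \<union> range Vv" by auto
  have union_mirror: "\<Union>(mirror M) = swap_prime ` \<Union>M"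
    unfolding mirror_def by (rule image_Union[symmetric])
  have "is_matching (E \<union> Ef E) (M \<union> mirror M)"
  proof (rule is_matching_Un[OF M])
    show "is_matching (Ef E) (mirror M)"
      using is_matching_image[OF inj_swap_prime M] mirror_bip[OF E] unfolding mirror_def by simp
    show "\<Union>M \<inter> \<Union>(mirror M) = {}"
      unfolding union_mirror using unprimed_Int_swap_prime unprimed by blast
  qed
  moreover have "\<Union>(M \<union> mirror M) \<inter> \<Union>(unmatched_EU n M) = {}"
  proof -
    have "\<Union>M \<inter> ?U = {}" by blast
    moreover have "swap_prime ` \<Union>M \<inter> swap_prime ` ?U = {}"
      using calculation inj_swap_prime by (simp flip: image_Int)
    moreover have "swap_prime ` \<Union>M \<inter> ?U = {}"
      using unprimed_Int_swap_prime[OF unprimed(2,1)] by blast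
    ultimately show ?thesis
      unfolding Union_Un_distrib union_mirror Union_unmatched_EU Int_Un_distrib Int_Un_distrib2
      using unprimed_Int_swap_prime[OF unprimed] by simp
  qed
  ultimately show ?thesis
    unfolding doubled_matching_def Gs_edges_def by (rule is_matching_Un[OF _ is_matching_unmatched_EU])
qed

lemma Union_doubled_matching:
  assumes E: "E \<subseteq> bip_edges n s" and M: "is_matching E M" and cov: "Vv ` {..<s} \<subseteq> \<Union>M"
  shows "\<Union>(doubled_matching n M) = Gs_vertices n s"
proof -
  let ?U = "Uv ` {i. i < n \<and> Uv i \<notin> \<Union>M}"
  have "M \<subseteq> bip_edges n s" using M E unfolding is_matching_def by blast
  then have "\<Union>M \<subseteq> Uv ` {..<n} \<union> Vv ` {..<s}" by (rule Union_bip_edges_subset)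
  then have B: "\<Union>M \<union> ?U = Uv ` {..<n} \<union> Vv ` {..<s}" using cov by auto
  have "\<Union>(doubled_matching n M) = (\<Union>M \<union> ?U) \<union> swap_prime ` (\<Union>M \<union> ?U)"
    unfolding doubled_matching_def Union_Un_distrib Union_unmatched_EU mirror_def image_Union image_Un
    by (simp add: Un_ac)
  then show ?thesis unfolding B Gs_vertices_def by (auto simp: image_Un image_image)
qed

lemma perfect_doubled_matching:
  assumes "E \<subseteq> bip_edges n s" "is_matching E M" "Vv ` {..<s} \<subseteq> \<Union>M"
  shows "perfect_matching (Gs_vertices n s) (Gs_edges n E) (doubled_matching n M)"
  unfolding perfect_matching_def
  using is_matching_doubled_matching[OF assms(1,2)] Union_doubled_matching[OF assms] by blast

lemma mweight_doubled_matching: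
  assumes E: "E \<subseteq> bip_edges n s" and M: "is_matching E M" and cov: "Vv ` {..<s} \<subseteq> \<Union>M"
  shows "mweight (ws E w k) (doubled_matching n M) = 2 * mweight w M + k * int (n - s)"
proof -
  have "doubled_matching n M \<inter> E = M"
    using doubled_matching_Int_bip[OF E] M unfolding is_matching_def by blast
  then show ?thesis
    using mweight_Gs_perfect[OF E perfect_doubled_matching[OF E M cov]]
    by (simp add: mirror_doubled_matching)
qed

theorem proposition4p3:
  fixes n s :: nat and E :: "vtx set set" and w :: "vtx set \<Rightarrow> int" and k :: int
    and N :: "vtx set set"
  assumes "s \<le> n"
    and "E \<subseteq> bip_edges n s"
    and "min_weight_perfect_matching (Gs_vertices n s) (Gs_edges n E) (ws E w k) N"
  shows "optimum_matching E w (N \<inter> E) \<and> Vv ` {..<s} \<subseteq> \<Union>(N \<inter> E)"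
proof -
  note E = assms(2)
  have N: "perfect_matching (Gs_vertices n s) (Gs_edges n E) N"
    and N_min: "\<And>P. perfect_matching (Gs_vertices n s) (Gs_edges n E) P \<Longrightarrow>
      mweight (ws E w k) N \<le> mweight (ws E w k) P"
    using assms(3) unfolding min_weight_perfect_matching_def by blast+
  define M\<^sub>1 M\<^sub>2 where "M\<^sub>1 = N \<inter> E" and "M\<^sub>2 = mirror N \<inter> E"
  have M\<^sub>1: "is_matching E M\<^sub>1" "Vv ` {..<s} \<subseteq> \<Union>M\<^sub>1"
    unfolding M\<^sub>1_def using Gs_perfect_matching_Int_E[OF N] by auto
  have M\<^sub>2: "is_matching E M\<^sub>2" "Vv ` {..<s} \<subseteq> \<Union>M\<^sub>2"
    unfolding M\<^sub>2_def using Gs_perfect_matching_Int_E[OF perfect_matching_mirror[OF E N]] by auto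
  have bound: "mweight w M\<^sub>1 + mweight w M\<^sub>2 \<le> 2 * mweight w M"
    if "is_matching E M" "Vv ` {..<s} \<subseteq> \<Union>M" for M
    using N_min[OF perfect_doubled_matching[OF E that]] mweight_doubled_matching[OF E that]
      mweight_Gs_perfect[OF E N] unfolding M\<^sub>1_def M\<^sub>2_def by simp
  have "mweight w M\<^sub>1 = mweight w M\<^sub>2"
    using bound[OF M\<^sub>1] bound[OF M\<^sub>2] by simp
  then have "mweight w M\<^sub>1 \<le> mweight w M"
    if "is_matching E M" "Vv ` {..<s} \<subseteq> \<Union>M" for M
    using bound[OF that] by simp
  then show ?thesis
    unfolding optimum_matching_def max_card_matching_bip_iff[OF E M\<^sub>1] M\<^sub>1_def[symmetric]
    using M\<^sub>1 by blast
qed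

end
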